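(* The two identities $(xy)(zt)=(ty)(zx)$ and $x(xy)=y$ form an independent basis for $\Sigma_{2,4}$.
   Context: $\Sigma_{2,4}$ is the set of groupoid identities satisfied in the integers $\mathbb{Z}$ by both binary operations $x-y$ and $-x-y$. A basis is a set of identities whose equational consequences are exactly $\Sigma_{2,4}$; it is independent if no member is a consequence of the others. *)

theory Defs
  imports Main
begin

datatype gterm = Var nat | Op gterm gterm

type_synonym identity = "gterm \<times> gterm"

fun eval :: "('a \<Rightarrow> 'a \<Rightarrow> 'a) \<Rightarrow> (nat \<Rightarrow> 'a) \<Rightarrow> gterm \<Rightarrow> 'a" where
  "eval f v (Var n) = v n"
| "eval f v (Op s t) = f (eval f v s) (eval f v t)"

fun subst :: "(nat \<Rightarrow> gterm) \<Rightarrow> gterm \<Rightarrow> gterm" where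
  "subst \<sigma> (Var n) = \<sigma> n"
| "subst \<sigma> (Op s t) = Op (subst \<sigma> s) (subst \<sigma> t)"

definition satisfies :: "('a \<Rightarrow> 'a \<Rightarrow> 'a) \<Rightarrow> identity \<Rightarrow> bool" where
  "satisfies f e \<longleftrightarrow> (\<forall>v. eval f v (fst e) = eval f v (snd e))"

definition Sigma24 :: "identity set" where
  "Sigma24 = {e. satisfies (\<lambda>x y::int. x - y) e \<and> satisfies (\<lambda>x y::int. - x - y) e}"

inductive derivable :: "identity set \<Rightarrow> gterm \<Rightarrow> gterm \<Rightarrow> bool" for E where
  ax: "(s, t) \<in> E \<Longrightarrow> derivable E (subst \<sigma> s) (subst \<sigma> t)"
| refl: "derivable E t t"
| sym: "derivable E s t \<Longrightarrow> derivable E t s"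
| trans: "derivable E s t \<Longrightarrow> derivable E t u \<Longrightarrow> derivable E s u"
| cong: "derivable E s1 t1 \<Longrightarrow> derivable E s2 t2 \<Longrightarrow> derivable E (Op s1 s2) (Op t1 t2)"

definition consequences :: "identity set \<Rightarrow> identity set" where
  "consequences E = {(s, t). derivable E s t}"

definition is_basis :: "identity set \<Rightarrow> identity set \<Rightarrow> bool" where
  "is_basis E \<Sigma> \<longleftrightarrow> consequences E = \<Sigma>"

definition independent :: "identity set \<Rightarrow> bool" where
  "independent E \<longleftrightarrow> (\<forall>e\<in>E. e \<notin> consequences (E - {e}))"

text \<open>Variables x, y, z, t are Var 0, Var 1, Var 2, Var 3.\<close>
definition E1 :: identity where
  "E1 = (Op (Op (Var 0) (Var 1)) (Op (Var 2) (Var 3)),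
         Op (Op (Var 3) (Var 1)) (Op (Var 2) (Var 0)))"

definition E2 :: identity where
  "E2 = (Op (Var 0) (Op (Var 0) (Var 1)), Var 1)"

end

theory Submission
  imports Defs HOL.Modules
begin

text \<open>
Both operations on \<open>\<int>\<close> satisfy the two identities, which gives soundness.  The right projection
\<open>x\<cdot>y = y\<close> satisfies only the second identity and a constant operation only the first, which
gives independence.

For completeness: in every model of the two identities, \<open>m(x,z,y) = (xz)((zz)y)\<close> behaves like
\<open>x - z + y\<close> in an abelian group (commutative in \<open>x, y\<close>, associative, \<open>m(x,x,y) = y\<close>).  Fixing a
base point \<open>o\<close>, \<open>x + y = m(x,o,y)\<close> is an abelian group, \<open>\<phi> x = x(oo)\<close> an involutive automorphism
of it, and \<open>x\<cdot>y = \<phi> x - y + oo\<close>.  In such an affine groupoid every term evaluates to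
\<open>\<Sum>\<^sub>n (a\<^sub>n x\<^sub>n + b\<^sub>n \<phi> x\<^sub>n) + p c + q \<phi> c\<close> with integer coefficients depending only on the term.
The two integer models detect \<open>a\<^sub>n \<plusminus> b\<^sub>n\<close>, and \<open>p, q\<close> are determined by \<open>\<Sum>\<^sub>n a\<^sub>n\<close> and \<open>\<Sum>\<^sub>n b\<^sub>n\<close>;
so every identity of \<open>\<Sigma>\<^sub>2\<^sub>,\<^sub>4\<close> holds in the free model of the two identities.
\<close>

lemma eval_subst: "eval f v (subst \<sigma> s) = eval f (\<lambda>n. eval f v (\<sigma> n)) s"
  by (induction s) auto

lemma derivable_sound:
  assumes "derivable E s t" and "\<And>e. e \<in> E \<Longrightarrow> satisfies f e"
  shows "eval f v s = eval f v t"
  using assms(1)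
proof (induction arbitrary: v rule: derivable.induct)
  case (ax s t \<sigma>)
  then show ?case using assms(2)[of "(s, t)"] by (simp add: eval_subst satisfies_def)
qed auto

locale E12_groupoid =
  fixes mult :: "'a \<Rightarrow> 'a \<Rightarrow> 'a" (infixl "\<cdot>" 70)
  assumes E1: "(x \<cdot> y) \<cdot> (z \<cdot> t) = (t \<cdot> y) \<cdot> (z \<cdot> x)"
    and E2: "x \<cdot> (x \<cdot> y) = y"
begin

lemma medial: "(x \<cdot> y) \<cdot> (z \<cdot> t) = (x \<cdot> z) \<cdot> (y \<cdot> t)"
  by (metis E1 E2)

lemma left_permute: "x \<cdot> (y \<cdot> (z \<cdot> t)) = z \<cdot> (y \<cdot> (x \<cdot> t))"
  by (metis E1 E2)

lemma right_involution: "(x \<cdot> (y \<cdot> y)) \<cdot> (y \<cdot> y) = x"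
  by (metis E1 E2)

definition malcev :: "'a \<Rightarrow> 'a \<Rightarrow> 'a \<Rightarrow> 'a" where
  "malcev x z y = (x \<cdot> z) \<cdot> ((z \<cdot> z) \<cdot> y)"

lemma malcev_indep: "malcev x z y = (x \<cdot> w) \<cdot> ((z \<cdot> w) \<cdot> y)"
  unfolding malcev_def by (metis medial E2)

lemma malcev_left: "malcev x x y = y"
  unfolding malcev_def by (rule E2)

lemma malcev_comm: "malcev x z y = malcev y z x"
  unfolding malcev_def by (rule E1)

lemma malcev_right: "malcev x y y = x"
  by (metis malcev_comm malcev_left)

lemma malcev_assoc: "malcev (malcev x u y) v z = malcev x u (malcev y v z)"
  by (metis E1 left_permute malcev_indep)

lemma malcev_mult: "malcev x z y \<cdot> w = malcev (x \<cdot> w) (z \<cdot> w) (y \<cdot> w)"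
  by (metis E2 malcev_indep)

lemma mult_eq_malcev: "x \<cdot> y = malcev (x \<cdot> (e \<cdot> e)) y (e \<cdot> e)"
proof -
  have "malcev (x \<cdot> (e \<cdot> e)) y (e \<cdot> e)
      = ((x \<cdot> (e \<cdot> e)) \<cdot> (e \<cdot> e)) \<cdot> ((y \<cdot> (e \<cdot> e)) \<cdot> (e \<cdot> e))"
    by (rule malcev_indep)
  also have "\<dots> = x \<cdot> y" by (simp only: right_involution)
  finally show ?thesis by simp
qed

end

fun nat_mult :: "nat \<Rightarrow> 'a::monoid_add \<Rightarrow> 'a" where
  "nat_mult 0 x = 0"
| "nat_mult (Suc n) x = x + nat_mult n x"

lemma nat_mult_add: "nat_mult (a + b) x = nat_mult a x + nat_mult b x"
  by (induction a) (simp_all add: add.assoc)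

definition int_mult :: "int \<Rightarrow> 'a::ab_group_add \<Rightarrow> 'a" where
  "int_mult k x = nat_mult (nat k) x - nat_mult (nat (- k)) x"

lemma int_mult_int_diff: "int_mult (int a - int b) x = nat_mult a x - nat_mult b x"
proof -
  let ?k = "int a - int b"
  have "nat ?k + b = nat (- ?k) + a" by simp
  then have "nat_mult (nat ?k) x + nat_mult b x = nat_mult (nat (- ?k)) x + nat_mult a x"
    by (metis nat_mult_add)
  then show ?thesis unfolding int_mult_def by (simp add: algebra_simps)
qed

lemma int_mult_add: "int_mult (k + l) x = int_mult k x + int_mult l x"
proof -
  obtain a b c d where "k = int a - int b" and "l = int c - int d"
    by (metis int_diff_cases)
  moreover have "int a - int b + (int c - int d) = int (a + c) - int (b + d)" by simp
  ultimately show ?thesis by (simp only: int_mult_int_diff nat_mult_add) simp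
qed

lemma int_mult_diff: "int_mult (k - l) x = int_mult k x - int_mult l x"
  using int_mult_add[of "k - l" l x] by (simp add: eq_diff_eq)

lemma int_mult_0 [simp]: "int_mult 0 x = 0"
  by (simp add: int_mult_def)

lemma int_mult_1 [simp]: "int_mult 1 x = x"
  by (simp add: int_mult_def)

lemma (in additive) int_mult: "f (int_mult k x) = int_mult k (f x)"
proof -
  have "f (nat_mult n x) = nat_mult n (f x)" for n
    by (induction n) (simp_all add: zero add)
  then show ?thesis by (simp add: int_mult_def diff)
qed

fun vars :: "gterm \<Rightarrow> nat set" where
  "vars (Var n) = {n}"
| "vars (Op s t) = vars s \<union> vars t"

lemma finite_vars: "finite (vars t)"
  by (induction t) auto

text \<open>
In an affine groupoid \<open>x\<cdot>y = \<phi> x - y + c\<close>, a term evaluates to the combination with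
coefficient \<open>lin_coeff t n\<close> on the \<open>n\<close>-th variable, \<open>phi_coeff t n\<close> on its image under \<open>\<phi>\<close>,
and the two components of \<open>const_coeffs t\<close> on \<open>c\<close> and \<open>\<phi> c\<close>.
\<close>

fun lin_coeff :: "gterm \<Rightarrow> nat \<Rightarrow> int" and phi_coeff :: "gterm \<Rightarrow> nat \<Rightarrow> int" where
  "lin_coeff (Var m) n = (if n = m then 1 else 0)"
| "phi_coeff (Var m) n = 0"
| "lin_coeff (Op s t) n = phi_coeff s n - lin_coeff t n"
| "phi_coeff (Op s t) n = lin_coeff s n - phi_coeff t n"

fun const_coeffs :: "gterm \<Rightarrow> int \<times> int" where
  "const_coeffs (Var m) = (0, 0)"
| "const_coeffs (Op s t) =
     (snd (const_coeffs s) - fst (const_coeffs t) + 1, fst (const_coeffs s) - snd (const_coeffs t))"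

lemma eval_affine:
  fixes \<phi> :: "'a::ab_group_add \<Rightarrow> 'a"
  assumes "additive \<phi>" and "\<And>x. \<phi> (\<phi> x) = x" and "finite V" and "vars t \<subseteq> V"
  shows "eval (\<lambda>x y. \<phi> x - y + c) v t =
    (\<Sum>n\<in>V. int_mult (lin_coeff t n) (v n) + int_mult (phi_coeff t n) (\<phi> (v n)))
    + int_mult (fst (const_coeffs t)) c + int_mult (snd (const_coeffs t)) (\<phi> c)"
  using assms(4)
proof (induction t)
  case (Var m)
  have "(\<Sum>n\<in>V. int_mult (if n = m then 1 else 0) (v n)) = (\<Sum>n\<in>V. if n = m then v n else 0)"
    by (rule sum.cong) auto
  then show ?case using Var assms(3) by simp
next
  case (Op s t)
  interpret additive \<phi> by (fact assms(1))
  show ?case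
    using Op by (simp add: add diff sum int_mult assms(2) int_mult_add int_mult_diff
        sum.distrib sum_subtractf algebra_simps)
qed

lemma const_coeffs_sums:
  assumes "finite V" and "vars t \<subseteq> V"
  shows "fst (const_coeffs t) - 2 * snd (const_coeffs t) = (\<Sum>n\<in>V. phi_coeff t n) \<and>
    snd (const_coeffs t) - 2 * fst (const_coeffs t) = (\<Sum>n\<in>V. lin_coeff t n) - 1"
  using assms(2)
proof (induction t)
  case (Var m)
  then show ?case using assms(1) by (simp add: sum.delta)
next
  case (Op s t)
  then show ?case by (simp add: sum_subtractf)
qed

lemma eval_minus_indicator:
  "eval (\<lambda>x y::int. x - y) (\<lambda>m. if m = n then 1 else 0) t = lin_coeff t n + phi_coeff t n"
  by (induction t) auto

lemma eval_neg_minus_indicator: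
  "eval (\<lambda>x y::int. - x - y) (\<lambda>m. if m = n then 1 else 0) t = lin_coeff t n - phi_coeff t n"
  by (induction t) auto

lemma Sigma24_coeffs:
  assumes "(s, t) \<in> Sigma24"
  shows "lin_coeff s = lin_coeff t" and "phi_coeff s = phi_coeff t"
    and "const_coeffs s = const_coeffs t"
proof -
  have "lin_coeff s n = lin_coeff t n \<and> phi_coeff s n = phi_coeff t n" for n
  proof -
    let ?\<delta> = "\<lambda>m. if m = n then 1 else 0 :: int"
    have "eval (\<lambda>x y. x - y) ?\<delta> s = eval (\<lambda>x y. x - y) ?\<delta> t"
      and "eval (\<lambda>x y. - x - y) ?\<delta> s = eval (\<lambda>x y. - x - y) ?\<delta> t"
      using assms by (simp_all add: Sigma24_def satisfies_def)
    then show ?thesis by (simp add: eval_minus_indicator eval_neg_minus_indicator)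
  qed
  then show lin: "lin_coeff s = lin_coeff t" and phi: "phi_coeff s = phi_coeff t" by auto
  let ?V = "vars s \<union> vars t"
  have "finite ?V" by (simp add: finite_vars)
  then show "const_coeffs s = const_coeffs t"
    using const_coeffs_sums[of ?V s] const_coeffs_sums[of ?V t] lin phi
    by (cases "const_coeffs s"; cases "const_coeffs t") auto
qed

lemma Sigma24_eval_affine:
  fixes \<phi> :: "'a::ab_group_add \<Rightarrow> 'a"
  assumes "(s, t) \<in> Sigma24" and "additive \<phi>" and "\<And>x. \<phi> (\<phi> x) = x"
  shows "eval (\<lambda>x y. \<phi> x - y + c) v s = eval (\<lambda>x y. \<phi> x - y + c) v t"
proof -
  let ?V = "vars s \<union> vars t"
  have "finite ?V" by (simp add: finite_vars)
  then show ?thesis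
    using eval_affine[OF assms(2,3), of ?V s] eval_affine[OF assms(2,3), of ?V t]
      Sigma24_coeffs[OF assms(1)] by simp
qed

lemma derivable_equivp: "equivp (derivable E)"
  by (rule equivpI) (auto simp: reflp_def symp_def transp_def intro: derivable.intros)

quotient_type E12_term = gterm / "derivable {E1, E2}"
  by (rule derivable_equivp)

lift_definition term_op :: "E12_term \<Rightarrow> E12_term \<Rightarrow> E12_term" is Op
  by (rule derivable.cong)

lemma derivable_instance:
  assumes "e \<in> E"
  shows "derivable E (subst \<sigma> (fst e)) (subst \<sigma> (snd e))"
  using assms derivable.ax[of "fst e" "snd e"] by simp

interpretation E12_term: E12_groupoid term_op
proof
  fix x y z t :: E12_term
  show "term_op (term_op x y) (term_op z t) = term_op (term_op t y) (term_op z x)"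
  proof transfer
    fix x y z t
    show "derivable {E1, E2} (Op (Op x y) (Op z t)) (Op (Op t y) (Op z x))"
      using derivable_instance[of E1 _ "\<lambda>n. [x, y, z, t] ! n"] by (simp add: E1_def)
  qed
  show "term_op x (term_op x y) = y"
  proof transfer
    fix x y
    show "derivable {E1, E2} (Op x (Op x y)) y"
      using derivable_instance[of E2 _ "\<lambda>n. [x, y] ! n"] by (simp add: E2_def)
  qed
qed

instantiation E12_term :: ab_group_add
begin

definition zero_E12_term :: E12_term where "zero_E12_term = abs_E12_term (Var 0)"
definition plus_E12_term :: "E12_term \<Rightarrow> E12_term \<Rightarrow> E12_term" where
  "plus_E12_term a b = E12_term.malcev a 0 b"
definition minus_E12_term :: "E12_term \<Rightarrow> E12_term \<Rightarrow> E12_term" where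
  "minus_E12_term a b = E12_term.malcev a b 0"
definition uminus_E12_term :: "E12_term \<Rightarrow> E12_term" where
  "uminus_E12_term a = E12_term.malcev 0 a 0"

instance
proof
  fix a b c :: E12_term
  show "a + b + c = a + (b + c)" by (simp add: plus_E12_term_def E12_term.malcev_assoc)
  show "a + b = b + a" by (simp add: plus_E12_term_def E12_term.malcev_comm)
  show "0 + a = a" by (simp add: plus_E12_term_def E12_term.malcev_left)
  show "- a + a = 0"
    by (simp add: plus_E12_term_def uminus_E12_term_def E12_term.malcev_assoc
        E12_term.malcev_left E12_term.malcev_right)
  show "a - b = a + - b"
    by (simp add: plus_E12_term_def minus_E12_term_def uminus_E12_term_def
        E12_term.malcev_assoc[symmetric] E12_term.malcev_right)
qed

end

lemma E12_term_malcev_eq: "E12_term.malcev a b c = a - b + c"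
  by (simp add: plus_E12_term_def minus_E12_term_def E12_term.malcev_assoc E12_term.malcev_left)

definition term_const :: E12_term where
  "term_const = term_op 0 0"

definition term_phi :: "E12_term \<Rightarrow> E12_term" where
  "term_phi a = term_op a term_const"

lemma additive_term_phi: "additive term_phi"
proof
  fix a b :: E12_term
  have "term_op 0 term_const = 0" unfolding term_const_def by (rule E12_term.E2)
  then show "term_phi (a + b) = term_phi a + term_phi b"
    by (simp add: term_phi_def plus_E12_term_def E12_term.malcev_mult)
qed

lemma term_phi_involutive: "term_phi (term_phi a) = a"
  by (simp add: term_phi_def term_const_def E12_term.right_involution)

lemma term_op_affine: "term_op = (\<lambda>a b. term_phi a - b + term_const)"
proof (intro ext)
  fix a b
  show "term_op a b = term_phi a - b + term_const"
    unfolding term_phi_def term_const_def E12_term_malcev_eq[symmetric]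
    by (rule E12_term.mult_eq_malcev)
qed

lemma abs_E12_term_eval: "abs_E12_term t = eval term_op (\<lambda>n. abs_E12_term (Var n)) t"
proof (induction t)
  case (Op s t)
  have "abs_E12_term (Op s t) = term_op (abs_E12_term s) (abs_E12_term t)"
    by (rule term_op.abs_eq[symmetric])
  with Op show ?case by simp
qed simp

lemma Sigma24_derivable:
  assumes "(s, t) \<in> Sigma24"
  shows "derivable {E1, E2} s t"
proof -
  let ?X = "\<lambda>n. abs_E12_term (Var n)"
  have "abs_E12_term s = eval term_op ?X s" by (rule abs_E12_term_eval)
  also have "\<dots> = eval term_op ?X t"
    unfolding term_op_affine
    by (rule Sigma24_eval_affine[OF assms additive_term_phi term_phi_involutive])
  also have "\<dots> = abs_E12_term t" by (rule abs_E12_term_eval[symmetric])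
  finally show ?thesis by (simp add: E12_term.abs_eq_iff)
qed

lemma derivable_Sigma24:
  assumes "derivable {E1, E2} s t"
  shows "(s, t) \<in> Sigma24"
proof -
  have minus: "satisfies (\<lambda>x y::int. x - y) e"
    and neg_minus: "satisfies (\<lambda>x y::int. - x - y) e"
    if "e \<in> {E1, E2}" for e
    using that by (auto simp: satisfies_def E1_def E2_def)
  show ?thesis
    unfolding Sigma24_def satisfies_def
    using derivable_sound[OF assms minus] derivable_sound[OF assms neg_minus] by simp
qed

lemma E1_not_derivable_from_E2: "\<not> derivable {E2} (fst E1) (snd E1)"
proof
  assume "derivable {E2} (fst E1) (snd E1)"
  then have "eval (\<lambda>x y::nat. y) id (fst E1) = eval (\<lambda>x y. y) id (snd E1)"
    by (rule derivable_sound) (auto simp: satisfies_def E2_def)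
  then show False by (simp add: E1_def)
qed

lemma E2_not_derivable_from_E1: "\<not> derivable {E1} (fst E2) (snd E2)"
proof
  assume "derivable {E1} (fst E2) (snd E2)"
  then have "eval (\<lambda>x y. True) (\<lambda>n. False) (fst E2) = eval (\<lambda>x y. True) (\<lambda>n. False) (snd E2)"
    by (rule derivable_sound) (auto simp: satisfies_def E1_def)
  then show False by (simp add: E2_def)
qed

theorem theorem3p2:
  shows "is_basis {E1, E2} Sigma24 \<and> independent {E1, E2}"
proof
  show "is_basis {E1, E2} Sigma24"
    unfolding is_basis_def consequences_def
    using Sigma24_derivable derivable_Sigma24 by auto
  have "E1 \<noteq> E2" by (simp add: E1_def E2_def)
  then have "{E1, E2} - {E1} = {E2}" and "{E1, E2} - {E2} = {E1}" by auto
  then show "independent {E1, E2}"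
    unfolding independent_def consequences_def
    using E1_not_derivable_from_E2 E2_not_derivable_from_E1 by (auto simp: case_prod_beta)
qed

end
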